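(* Let $A=(a_1\ a_2\ a_3)$ with positive integers $a_1<a_2<a_3$ be such that the toric ideal $I_A$ is not a complete intersection. Let $M=\{g_1=(-c_1,v_{12},v_{13}),\ g_2=(v_{21},-c_2,v_{23}),\ g_3=(v_{31},v_{32},-c_3)\}$ be a minimal Markov basis for $A$, where all $c_i$ and $v_{ij}$ are positive integers. Then the following are equivalent: (1) $M$ is distance reducing; (2) $M$ reduces the distance of the circuit $z=\gamma(0,a_3,-a_2)$ where $\gamma=1/\gcd(a_2,a_3)$; (3) at least one of $v_{21}<c_2+v_{23}$ or $v_{31}<v_{32}+c_3$ holds.
   Context: For $z\in\mathbb Z^n$, $z^+,z^-\in\mathbb N^n$ denote the unique vectors with disjoint supports and $z=z^+-z^-$; $\|\cdot\|$ is the $1$-norm. The toric ideal is $I_A=\langle x^{u^+}-x^{u^-}:u\in\ker(A)\rangle$; it is a complete intersection if it is generated by $\dim\ker(A)$ elements. A Markov basis is a set $B\subseteq\ker(A)$ whose binomials $x^{u^+}-x^{u^-}$ generate $I_A$; minimal means no proper subset is a Markov basis. For nonzero $z\in\ker(A)$, $u\in\ker(A)$ reduces the distance of $z$ if there exist $(p,q)\in\{(z^+,z^-),(z^-,z^+)\}$ and $\varepsilon\in\{\pm1\}$ with $p+\varepsilon u\in\mathbb N^n$ and $\|p+\varepsilon u-q\|<\|z\|$. $B$ reduces the distance of $Z$ if each nonzero $z\in Z$ has its distance reduced by some element of $B$; $B$ is distance reducing if it reduces the distance of $\ker(A)$. *)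

theory Defs
  imports Main "HOL-Library.Poly_Mapping"
begin

text \<open>Integer vectors in Z^n are functions nat => int, supported on {..<n}.
  Polynomials in k[x_0,...,x_{n-1}] are ((nat =>0 nat) =>0 'k).\<close>

type_synonym 'k mpoly = "(nat \<Rightarrow>\<^sub>0 nat) \<Rightarrow>\<^sub>0 'k"

definition vec3 :: "int \<Rightarrow> int \<Rightarrow> int \<Rightarrow> nat \<Rightarrow> int" where
  "vec3 x y z = (\<lambda>i. if i = 0 then x else if i = 1 then y else if i = 2 then z else 0)"

definition kerA :: "(nat \<Rightarrow> int) \<Rightarrow> nat \<Rightarrow> (nat \<Rightarrow> int) set" where
  "kerA a n = {u. (\<forall>i\<ge>n. u i = 0) \<and> (\<Sum>i<n. a i * u i) = 0}"

definition pos_part :: "(nat \<Rightarrow> int) \<Rightarrow> nat \<Rightarrow> nat" where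
  "pos_part z = (\<lambda>i. nat (z i))"

definition neg_part :: "(nat \<Rightarrow> int) \<Rightarrow> nat \<Rightarrow> nat" where
  "neg_part z = (\<lambda>i. nat (- z i))"

definition norm1 :: "nat \<Rightarrow> (nat \<Rightarrow> int) \<Rightarrow> int" where
  "norm1 n z = (\<Sum>i<n. \<bar>z i\<bar>)"

definition monom :: "'k itself \<Rightarrow> nat \<Rightarrow> (nat \<Rightarrow> nat) \<Rightarrow> 'k::comm_ring_1 mpoly" where
  "monom _ n u = Poly_Mapping.single (\<Sum>i<n. Poly_Mapping.single i (u i)) 1"

definition binom :: "'k itself \<Rightarrow> nat \<Rightarrow> (nat \<Rightarrow> int) \<Rightarrow> 'k::comm_ring_1 mpoly" where
  "binom K n u = monom K n (pos_part u) - monom K n (neg_part u)"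

definition ideal_gen :: "'a::comm_ring_1 set \<Rightarrow> 'a set" where
  "ideal_gen G = {(\<Sum>g\<in>F. r g * g) | F r. finite F \<and> F \<subseteq> G}"

definition toric_ideal :: "'k itself \<Rightarrow> (nat \<Rightarrow> int) \<Rightarrow> nat \<Rightarrow> 'k::field mpoly set" where
  "toric_ideal K a n = ideal_gen (binom K n ` kerA a n)"

text \<open>Complete intersection: generated by dim ker(A) elements. For a nonzero 1 x n
  matrix, dim ker(A) = n - 1.\<close>
definition complete_intersection_row :: "'k::field itself \<Rightarrow> (nat \<Rightarrow> int) \<Rightarrow> nat \<Rightarrow> bool" where
  "complete_intersection_row K a n \<longleftrightarrow>
     (\<exists>G. finite G \<and> card G \<le> n - 1 \<and> ideal_gen G = toric_ideal K a n)"

definition markov_basis :: "'k::field itself \<Rightarrow> (nat \<Rightarrow> int) \<Rightarrow> nat \<Rightarrow> (nat \<Rightarrow> int) set \<Rightarrow> bool" where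
  "markov_basis K a n B \<longleftrightarrow> B \<subseteq> kerA a n \<and> ideal_gen (binom K n ` B) = toric_ideal K a n"

definition minimal_markov_basis :: "'k::field itself \<Rightarrow> (nat \<Rightarrow> int) \<Rightarrow> nat \<Rightarrow> (nat \<Rightarrow> int) set \<Rightarrow> bool" where
  "minimal_markov_basis K a n B \<longleftrightarrow>
     markov_basis K a n B \<and> (\<forall>B'. B' \<subset> B \<longrightarrow> \<not> markov_basis K a n B')"

definition reduces_dist :: "nat \<Rightarrow> (nat \<Rightarrow> int) \<Rightarrow> (nat \<Rightarrow> int) \<Rightarrow> bool" where
  "reduces_dist n u z \<longleftrightarrow>
     (\<exists>(p, q) \<in> {(pos_part z, neg_part z), (neg_part z, pos_part z)}.
        \<exists>\<epsilon> \<in> {1, -1::int}.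
          (\<forall>i<n. 0 \<le> int (p i) + \<epsilon> * u i) \<and>
          (\<Sum>i<n. \<bar>int (p i) + \<epsilon> * u i - int (q i)\<bar>) < norm1 n z)"

definition reduces_dist_set :: "nat \<Rightarrow> (nat \<Rightarrow> int) set \<Rightarrow> (nat \<Rightarrow> int) set \<Rightarrow> bool" where
  "reduces_dist_set n B Z \<longleftrightarrow> (\<forall>z\<in>Z. z \<noteq> (\<lambda>_. 0) \<longrightarrow> (\<exists>u\<in>B. reduces_dist n u z))"

definition distance_reducing :: "(nat \<Rightarrow> int) \<Rightarrow> nat \<Rightarrow> (nat \<Rightarrow> int) set \<Rightarrow> bool" where
  "distance_reducing a n B \<longleftrightarrow> reduces_dist_set n B (kerA a n)"

end

theory Submission
  imports Defs
begin

(* Every monomial of an element of an ideal is a multiple of a monomial of one of its generators.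
   Hence, for a Markov basis M and every nonzero z in ker A, both z^+ and z^- dominate the positive
   or the negative part of some move. As all v_ij are positive, this makes c_i the least multiple of
   a_i in the semigroup generated by the other two weights, which yields Herzog's relations
   c1 = v21 + v31, c2 = v12 + v32, c3 = v13 + v23; the order a1 < a2 < a3 adds v12 + v13 < c1 and
   v23 < c2. Up to sign, a nonzero kernel vector z has exactly one positive coordinate z_i, and then
   z_i >= c_i. Together with the dominance of z^- this leaves a few cases, in each of which some move,
   added or subtracted, shortens z; condition (3) is needed only when the first coordinate of z is
   too small to absorb v21 or v31. Conversely, if (3) fails, every admissible step from the circuit
   (0, a3, -a2)/gcd(a2, a3) leads to a vector that is at least as long. *)

definition monomial_exponent :: "nat \<Rightarrow> (nat \<Rightarrow> nat) \<Rightarrow> (nat \<Rightarrow>\<^sub>0 nat)" where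
  "monomial_exponent n u = (\<Sum>i<n. Poly_Mapping.single i (u i))"

lemma lookup_monomial_exponent:
  "Poly_Mapping.lookup (monomial_exponent n u) j = (if j < n then u j else 0)"
  by (auto simp: monomial_exponent_def lookup_sum lookup_single when_def)

lemma monom_eq_single: "monom K n u = Poly_Mapping.single (monomial_exponent n u) 1"
  by (simp add: monom_def monomial_exponent_def)

lemma keys_binom_subset:
  "Poly_Mapping.keys (binom K n u) \<subseteq>
     {monomial_exponent n (pos_part u), monomial_exponent n (neg_part u)}"
  by (auto simp: binom_def monom_eq_single in_keys_iff lookup_minus lookup_single when_def
      split: if_splits)

lemma keys_binom:
  assumes "i < n" "z i \<noteq> 0"
  shows "Poly_Mapping.keys (binom K n z) =
     {monomial_exponent n (pos_part z), monomial_exponent n (neg_part z)}"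
proof -
  have "Poly_Mapping.lookup (monomial_exponent n (pos_part z)) i \<noteq>
        Poly_Mapping.lookup (monomial_exponent n (neg_part z)) i"
    using assms by (simp add: lookup_monomial_exponent pos_part_def neg_part_def)
  then have "monomial_exponent n (pos_part z) \<noteq> monomial_exponent n (neg_part z)"
    by metis
  then show ?thesis
    by (auto simp: binom_def monom_eq_single in_keys_iff lookup_minus lookup_single when_def
        split: if_splits)
qed

lemma ideal_gen_keys_upward_closed:
  fixes G :: "('a::comm_monoid_add \<Rightarrow>\<^sub>0 'b::comm_ring_1) set"
  assumes upward: "\<And>m m'. P m \<Longrightarrow> P (m + m')"
    and generators: "\<And>g m. g \<in> G \<Longrightarrow> m \<in> Poly_Mapping.keys g \<Longrightarrow> P m"
    and "f \<in> ideal_gen G" "m \<in> Poly_Mapping.keys f"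
  shows "P m"
proof -
  obtain F r where f: "f = (\<Sum>g\<in>F. r g * g)" and "finite F" "F \<subseteq> G"
    using assms(3) unfolding ideal_gen_def by blast
  have "\<forall>m\<in>Poly_Mapping.keys (\<Sum>g\<in>F. r g * g). P m"
    using \<open>finite F\<close> \<open>F \<subseteq> G\<close>
  proof (induction F rule: finite_induct)
    case (insert g F)
    have "P m" if m: "m \<in> Poly_Mapping.keys (r g * g)" for m
    proof -
      obtain b c where "m = b + c" "c \<in> Poly_Mapping.keys g"
        using keys_mult[of "r g" g] m by blast
      then show "P m"
        using upward[of c b] generators[of g c] insert.prems by (simp add: add.commute)
    qed
    then show ?case
      using insert keys_add[of "r g * g" "\<Sum>g\<in>F. r g * g"] by auto
  qed simp
  then show ?thesis using assms(4) f by simp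
qed

lemma ideal_gen_base: "g \<in> G \<Longrightarrow> g \<in> ideal_gen G"
  unfolding ideal_gen_def by (rule CollectI, rule exI[of _ "{g}"], rule exI[of _ "\<lambda>_. 1"]) simp

lemma kerA_nonzero_coordinate:
  assumes "z \<in> kerA a n" "z \<noteq> (\<lambda>_. 0)"
  obtains i where "i < n" "z i \<noteq> 0"
  using assms by (auto simp: kerA_def) (metis not_le)

lemma markov_basis_dominates_parts:
  assumes B: "markov_basis K a n B" and z: "z \<in> kerA a n" "z \<noteq> (\<lambda>_. 0)"
    and p: "p \<in> {pos_part z, neg_part z}"
  shows "\<exists>u\<in>B. \<exists>q\<in>{pos_part u, neg_part u}. \<forall>i<n. q i \<le> p i"
proof -
  define P where "P m \<longleftrightarrow> (\<exists>u\<in>B. \<exists>q\<in>{pos_part u, neg_part u}.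
    \<forall>i<n. q i \<le> Poly_Mapping.lookup m i)" for m
  have upward: "P (m + m')" if "P m" for m m'
    using that unfolding P_def lookup_add by (meson trans_le_add1)
  have generators: "P m" if g: "g \<in> binom K n ` B" and m: "m \<in> Poly_Mapping.keys g" for g m
  proof -
    obtain u where "u \<in> B" "g = binom K n u"
      using g by blast
    then obtain q where "q \<in> {pos_part u, neg_part u}" "m = monomial_exponent n q"
      using m keys_binom_subset by blast
    then show "P m"
      unfolding P_def using \<open>u \<in> B\<close> by (auto simp: lookup_monomial_exponent)
  qed
  have "binom K n z \<in> ideal_gen (binom K n ` B)"
    using B z(1) by (auto simp: markov_basis_def toric_ideal_def intro: ideal_gen_base)
  moreover obtain i where "i < n" "z i \<noteq> 0"
    using z by (rule kerA_nonzero_coordinate)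
  then have "monomial_exponent n p \<in> Poly_Mapping.keys (binom K n z)"
    using p by (auto simp add: keys_binom)
  ultimately have "P (monomial_exponent n p)"
    by (metis ideal_gen_keys_upward_closed[where P = P and G = "binom K n ` B"] upward generators)
  then show ?thesis
    by (simp add: P_def lookup_monomial_exponent)
qed

lemma uminus_in_kerA_iff: "- z \<in> kerA a n \<longleftrightarrow> z \<in> kerA a n"
  by (simp add: kerA_def sum_negf)

lemma vec3_apply [simp]:
  "vec3 x y w 0 = x" "vec3 x y w 1 = y" "vec3 x y w (Suc 0) = y" "vec3 x y w 2 = w"
  by (simp_all add: vec3_def)

lemma vec3_eq_0_iff: "vec3 x y w = (\<lambda>_. 0) \<longleftrightarrow> x = 0 \<and> y = 0 \<and> w = 0"
  by (metis vec3_apply(1,2,4) vec3_def)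

lemma sum_lessThan_3: "(\<Sum>i<(3::nat). f i) = f 0 + f 1 + (f 2 :: 'a::comm_monoid_add)"
  by (simp add: eval_nat_numeral add.assoc)

lemma all_lessThan_3: "(\<forall>i<3. P i) \<longleftrightarrow> P 0 \<and> P 1 \<and> P (2::nat)"
  by (auto simp: eval_nat_numeral less_Suc_eq)

lemma kerA_3_iff:
  "z \<in> kerA a 3 \<longleftrightarrow> (\<forall>i\<ge>3. z i = 0) \<and> a 0 * z 0 + a 1 * z 1 + a 2 * z 2 = 0"
  by (simp add: kerA_def sum_lessThan_3)

lemma vec3_in_kerA_iff:
  "vec3 x y w \<in> kerA (vec3 a1 a2 a3) 3 \<longleftrightarrow> a1 * x + a2 * y + a3 * w = 0"
  by (simp add: kerA_3_iff vec3_def)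

lemma kerA_3_single_positive:
  fixes a1 a2 a3 :: int
  assumes "0 < a1" "0 < a2" "0 < a3"
    and z: "z \<in> kerA (vec3 a1 a2 a3) 3" "z \<noteq> (\<lambda>_. 0)"
  obtains y where "y \<in> {z, - z}"
    and "(0 < y 0 \<and> y 1 \<le> 0 \<and> y 2 \<le> 0) \<or> (y 0 \<le> 0 \<and> 0 < y 1 \<and> y 2 \<le> 0)
           \<or> (y 0 \<le> 0 \<and> y 1 \<le> 0 \<and> 0 < y 2)"
proof -
  have sign: "0 < z i \<longleftrightarrow> 0 < a * z i" "z i < 0 \<longleftrightarrow> a * z i < 0" if "0 < a" for a i
    using that by (simp_all add: zero_less_mult_iff mult_less_0_iff)
  have "a1 * z 0 + a2 * z 1 + a3 * z 2 = 0"
    using z(1) by (simp add: kerA_3_iff)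
  moreover obtain i where "i < 3" "z i \<noteq> 0"
    using z by (rule kerA_nonzero_coordinate)
  then have "z 0 \<noteq> 0 \<or> z 1 \<noteq> 0 \<or> z 2 \<noteq> 0"
    by (auto simp: eval_nat_numeral less_Suc_eq)
  \<comment> \<open>a positive combination of the coordinates vanishes, so both signs occur\<close>
  ultimately have "(0 < z 0 \<or> 0 < z 1 \<or> 0 < z 2) \<and> (z 0 < 0 \<or> z 1 < 0 \<or> z 2 < 0)"
    using sign[OF assms(1), of 0] sign[OF assms(2), of 1] sign[OF assms(3), of 2] by smt
  then have
    "((0 < z 0 \<and> z 1 \<le> 0 \<and> z 2 \<le> 0) \<or> (z 0 \<le> 0 \<and> 0 < z 1 \<and> z 2 \<le> 0)
        \<or> (z 0 \<le> 0 \<and> z 1 \<le> 0 \<and> 0 < z 2)) \<or>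
     ((0 < - z 0 \<and> - z 1 \<le> 0 \<and> - z 2 \<le> 0) \<or> (- z 0 \<le> 0 \<and> 0 < - z 1 \<and> - z 2 \<le> 0)
        \<or> (- z 0 \<le> 0 \<and> - z 1 \<le> 0 \<and> 0 < - z 2))"
    by linarith
  then show ?thesis
    using that[of z] that[of "- z"] by auto
qed

lemma circuit_in_kerA:
  fixes a1 a2 a3 :: int
  shows "vec3 0 (a3 div gcd a2 a3) (- (a2 div gcd a2 a3)) \<in> kerA (vec3 a1 a2 a3) 3"
  by (simp add: vec3_in_kerA_iff div_mult_swap mult.commute)

lemma div_gcd_pos:
  fixes a b :: int
  assumes "0 < a" "0 < b"
  shows "0 < a div gcd a b" "0 < b div gcd a b"
  using assms by (simp_all add: pos_imp_zdiv_pos_iff gcd_le1_int gcd_le2_int)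

lemma reduces_dist_iff:
  "reduces_dist n u z \<longleftrightarrow>
     (\<exists>\<epsilon>\<in>{1, -1::int}. (\<Sum>i<n. \<bar>z i + \<epsilon> * u i\<bar>) < norm1 n z \<and>
        ((\<forall>i<n. 0 \<le> int (pos_part z i) + \<epsilon> * u i) \<or> (\<forall>i<n. 0 \<le> int (neg_part z i) - \<epsilon> * u i)))"
proof -
  have pos: "int (pos_part z i) + \<epsilon> * u i - int (neg_part z i) = z i + \<epsilon> * u i" for i \<epsilon>
    by (simp add: pos_part_def neg_part_def)
  have neg: "\<bar>int (neg_part z i) + \<epsilon> * u i - int (pos_part z i)\<bar> = \<bar>z i - \<epsilon> * u i\<bar>" for i \<epsilon>
    by (simp add: pos_part_def neg_part_def abs_minus_commute)
  show ?thesis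
    unfolding reduces_dist_def bex_simps prod.case pos neg
    by simp argo
qed

lemma reduces_dist_uminus: "reduces_dist n u (- z) \<longleftrightarrow> reduces_dist n u z"
proof -
  have "pos_part (- z) = neg_part z" "neg_part (- z) = pos_part z"
    by (simp_all add: pos_part_def neg_part_def fun_eq_iff)
  moreover have "norm1 n (- z) = norm1 n z"
    by (simp add: norm1_def)
  ultimately show ?thesis
    unfolding reduces_dist_def by (simp only: insert_commute)
qed

lemma reduces_dist_3_iff:
  "reduces_dist 3 u z \<longleftrightarrow>
     (\<exists>\<epsilon>\<in>{1, -1::int}.
        \<bar>z 0 + \<epsilon> * u 0\<bar> + \<bar>z 1 + \<epsilon> * u 1\<bar> + \<bar>z 2 + \<epsilon> * u 2\<bar>
          < \<bar>z 0\<bar> + \<bar>z 1\<bar> + \<bar>z 2\<bar> \<and>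
        ((0 \<le> max 0 (z 0) + \<epsilon> * u 0 \<and> 0 \<le> max 0 (z 1) + \<epsilon> * u 1
            \<and> 0 \<le> max 0 (z 2) + \<epsilon> * u 2) \<or>
         (0 \<le> max 0 (- z 0) - \<epsilon> * u 0 \<and> 0 \<le> max 0 (- z 1) - \<epsilon> * u 1
            \<and> 0 \<le> max 0 (- z 2) - \<epsilon> * u 2)))"
  unfolding reduces_dist_iff norm1_def sum_lessThan_3 all_lessThan_3
  by (simp add: pos_part_def neg_part_def)

locale positive_markov_basis3 =
  fixes K :: "'k::field itself"
    and a1 a2 a3 c1 c2 c3 v12 v13 v21 v23 v31 v32 :: int
  assumes a_pos: "0 < a1" and a_less: "a1 < a2" "a2 < a3"
    and c_pos: "0 < c1" "0 < c2" "0 < c3"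
    and v_pos: "0 < v12" "0 < v13" "0 < v21" "0 < v23" "0 < v31" "0 < v32"
    and markov: "markov_basis K (vec3 a1 a2 a3) 3
                   {vec3 (-c1) v12 v13, vec3 v21 (-c2) v23, vec3 v31 v32 (-c3)}"
begin

abbreviation "A \<equiv> vec3 a1 a2 a3"
abbreviation "g1 \<equiv> vec3 (-c1) v12 v13"
abbreviation "g2 \<equiv> vec3 v21 (-c2) v23"
abbreviation "g3 \<equiv> vec3 v31 v32 (-c3)"
abbreviation "M \<equiv> {g1, g2, g3}"

lemma move_relations:
  "c1 * a1 = v12 * a2 + v13 * a3" "c2 * a2 = v21 * a1 + v23 * a3" "c3 * a3 = v31 * a1 + v32 * a2"
  using markov by (auto simp: markov_basis_def vec3_in_kerA_iff algebra_simps)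

lemma positive_part_dominates_move:
  assumes "z \<in> kerA A 3" "z \<noteq> (\<lambda>_. 0)"
  shows "(v12 \<le> z 1 \<and> v13 \<le> z 2) \<or> c1 \<le> z 0 \<or> (v21 \<le> z 0 \<and> v23 \<le> z 2) \<or> c2 \<le> z 1
       \<or> (v31 \<le> z 0 \<and> v32 \<le> z 1) \<or> c3 \<le> z 2"
proof -
  obtain u q where u: "u \<in> M" and q: "q \<in> {pos_part u, neg_part u}"
    and le: "\<forall>i<3. q i \<le> pos_part z i"
    using markov_basis_dominates_parts[OF markov assms, of "pos_part z"] by auto
  have "(int (q 0), int (q 1), int (q 2)) \<in>
      {(0, v12, v13), (c1, 0, 0), (v21, 0, v23), (0, c2, 0), (v31, v32, 0), (0, 0, c3)}"
    using u q c_pos v_pos by (elim insertE emptyE) (simp_all add: pos_part_def neg_part_def)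
  moreover have "int (q 0) \<le> max 0 (z 0)" "int (q 1) \<le> max 0 (z 1)" "int (q 2) \<le> max 0 (z 2)"
    using le by (auto simp: all_lessThan_3 pos_part_def max_def le_nat_iff)
  ultimately show ?thesis
    using c_pos v_pos by (elim insertE emptyE) auto
qed

lemma c1_minimal:
  assumes "z \<in> kerA A 3" "z \<noteq> (\<lambda>_. 0)" "z 1 \<le> 0" "z 2 \<le> 0"
  shows "c1 \<le> z 0"
  using positive_part_dominates_move[OF assms(1,2)] assms(3,4) c_pos v_pos by auto

lemma c2_minimal:
  assumes "z \<in> kerA A 3" "z \<noteq> (\<lambda>_. 0)" "z 0 \<le> 0" "z 2 \<le> 0"
  shows "c2 \<le> z 1"
  using positive_part_dominates_move[OF assms(1,2)] assms(3,4) c_pos v_pos by auto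

lemma c3_minimal:
  assumes "z \<in> kerA A 3" "z \<noteq> (\<lambda>_. 0)" "z 0 \<le> 0" "z 1 \<le> 0"
  shows "c3 \<le> z 2"
  using positive_part_dominates_move[OF assms(1,2)] assms(3,4) c_pos v_pos by auto

lemma v_less_c: "v21 < c1" "v12 < c2" "v31 < c1" "v13 < c3" "v32 < c2" "v23 < c3"
proof -
  \<comment> \<open>the vectors -(g1 + g2), -(g1 + g3) and -(g2 + g3)\<close>
  have k12: "vec3 (c1 - v21) (c2 - v12) (- v13 - v23) \<in> kerA A 3"
    and k13: "vec3 (c1 - v31) (- v12 - v32) (c3 - v13) \<in> kerA A 3"
    and k23: "vec3 (- v21 - v31) (c2 - v32) (c3 - v23) \<in> kerA A 3"
    using move_relations by (simp_all add: vec3_in_kerA_iff algebra_simps)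
  have "vec3 (c1 - v21) (c2 - v12) (- v13 - v23) \<noteq> (\<lambda>_. 0)"
    and "vec3 (c1 - v31) (- v12 - v32) (c3 - v13) \<noteq> (\<lambda>_. 0)"
    and "vec3 (- v21 - v31) (c2 - v32) (c3 - v23) \<noteq> (\<lambda>_. 0)"
    using v_pos by (simp_all add: vec3_eq_0_iff)
  note nonzero = this
  show "v21 < c1" using c2_minimal[OF k12 nonzero(1)] v_pos by force
  show "v12 < c2" using c1_minimal[OF k12 nonzero(1)] v_pos by force
  show "v31 < c1" using c3_minimal[OF k13 nonzero(2)] v_pos by force
  show "v13 < c3" using c1_minimal[OF k13 nonzero(2)] v_pos by force
  show "v32 < c2" using c3_minimal[OF k23 nonzero(3)] v_pos by force
  show "v23 < c3" using c2_minimal[OF k23 nonzero(3)] v_pos by force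
qed

lemma herzog_relations: "c1 = v21 + v31" "c2 = v12 + v32" "c3 = v13 + v23"
proof -
  \<comment> \<open>the vectors g2 + g3, g1 + g3 and g1 + g2\<close>
  have k23: "vec3 (v21 + v31) (v32 - c2) (v23 - c3) \<in> kerA A 3"
    and k13: "vec3 (v31 - c1) (v12 + v32) (v13 - c3) \<in> kerA A 3"
    and k12: "vec3 (v21 - c1) (v12 - c2) (v13 + v23) \<in> kerA A 3"
    using move_relations by (simp_all add: vec3_in_kerA_iff algebra_simps)
  have "c1 \<le> v21 + v31"
    using c1_minimal[OF k23] v_less_c by (simp add: vec3_eq_0_iff)
  moreover have "c2 \<le> v12 + v32"
    using c2_minimal[OF k13] v_less_c by (simp add: vec3_eq_0_iff)
  moreover have "c3 \<le> v13 + v23"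
    using c3_minimal[OF k12] v_less_c by (simp add: vec3_eq_0_iff)
  ultimately have "0 \<le> (v21 + v31 - c1) * a1" "0 \<le> (v12 + v32 - c2) * a2" "0 \<le> (v13 + v23 - c3) * a3"
    using a_pos a_less by simp_all
  moreover have "(v21 + v31 - c1) * a1 + (v12 + v32 - c2) * a2 + (v13 + v23 - c3) * a3 = 0"
    using move_relations by (simp add: algebra_simps)
  ultimately have "(v21 + v31 - c1) * a1 = 0" "(v12 + v32 - c2) * a2 = 0" "(v13 + v23 - c3) * a3 = 0"
    by linarith+
  then show "c1 = v21 + v31" "c2 = v12 + v32" "c3 = v13 + v23"
    using a_pos a_less by simp_all
qed

lemma weight_order_bounds: "v12 + v13 < c1" "v23 < c2"
proof -
  have "v12 * a1 < v12 * a2" "v13 * a1 < v13 * a3"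
    using a_pos a_less v_pos by simp_all
  then have "(v12 + v13) * a1 < c1 * a1"
    using move_relations(1) by (simp add: algebra_simps)
  then show "v12 + v13 < c1"
    using a_pos by (simp add: mult_less_cancel_right)
  have "0 < v21 * a1"
    using a_pos v_pos by simp
  then have "v23 * a3 < c2 * a2"
    using move_relations(2) by linarith
  also have "\<dots> < c2 * a3"
    using a_less c_pos by simp
  finally show "v23 < c2"
    using a_pos a_less by (simp add: mult_less_cancel_right)
qed

lemma reduces_dist_first_positive:
  assumes z: "z \<in> kerA A 3" and sign: "0 < z 0" "z 1 \<le> 0" "z 2 \<le> 0"
  shows "\<exists>g\<in>M. reduces_dist 3 g z"
proof -
  have "c1 \<le> z 0"
    using c1_minimal[OF z] sign by force
  \<comment> \<open>z + g1 is shorter than z by at least c1 - v12 - v13\<close>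
  then have "reduces_dist 3 g1 z"
    unfolding reduces_dist_3_iff using sign weight_order_bounds v_pos
    by (intro bexI[where x = 1]) (auto simp: abs_if)
  then show ?thesis by blast
qed

lemma reduces_dist_second_positive:
  assumes z: "z \<in> kerA A 3" and sign: "z 0 \<le> 0" "0 < z 1" "z 2 \<le> 0"
    and cond: "v21 < c2 + v23 \<or> v31 < v32 + c3"
  shows "\<exists>g\<in>M. reduces_dist 3 g z"
proof -
  have nonzero: "z \<noteq> (\<lambda>_. 0)"
    using sign by force
  have "c2 \<le> z 1"
    using c2_minimal[OF z nonzero] sign by simp
  have "- z \<in> kerA A 3" "- z \<noteq> (\<lambda>_. 0)"
    using z nonzero by (simp_all add: uminus_in_kerA_iff fun_eq_iff)
  then have "c1 \<le> - z 0 \<or> (v21 \<le> - z 0 \<and> v23 \<le> - z 2) \<or> c3 \<le> - z 2"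
    using positive_part_dominates_move sign v_pos c_pos by force
  then consider "v21 \<le> - z 0" | "- z 0 < v21" "c3 \<le> - z 2"
    using herzog_relations v_pos by force
  then show ?thesis
  proof cases
    case 1
    \<comment> \<open>z + g2 is shorter than z by at least v21 + c2 - v23\<close>
    have "reduces_dist 3 g2 z"
      unfolding reduces_dist_3_iff using 1 sign \<open>c2 \<le> z 1\<close> weight_order_bounds v_pos
      by (intro bexI[where x = 1]) (auto simp: abs_if)
    then show ?thesis by blast
  next
    case 2
    from cond show ?thesis
    proof
      assume "v21 < c2 + v23"
      \<comment> \<open>z + g2 is shorter than z by at least c2 + v23 - v21\<close>
      then have "reduces_dist 3 g2 z"
        unfolding reduces_dist_3_iff using 2 sign \<open>c2 \<le> z 1\<close> herzog_relations v_pos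
        by (intro bexI[where x = 1]) (auto simp: abs_if)
      then show ?thesis by blast
    next
      assume "v31 < v32 + c3"
      \<comment> \<open>z - g3 is shorter than z by at least v32 + c3 - v31\<close>
      then have "reduces_dist 3 g3 z"
        unfolding reduces_dist_3_iff using 2 sign \<open>c2 \<le> z 1\<close> herzog_relations v_pos
        by (intro bexI[where x = "-1"]) (auto simp: abs_if)
      then show ?thesis by blast
    qed
  qed
qed

lemma reduces_dist_third_positive:
  assumes z: "z \<in> kerA A 3" and sign: "z 0 \<le> 0" "z 1 \<le> 0" "0 < z 2"
    and cond: "v21 < c2 + v23 \<or> v31 < v32 + c3"
  shows "\<exists>g\<in>M. reduces_dist 3 g z"
proof -
  have nonzero: "z \<noteq> (\<lambda>_. 0)"
    using sign by force
  have "c3 \<le> z 2"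
    using c3_minimal[OF z nonzero] sign by simp
  have "- z \<in> kerA A 3" "- z \<noteq> (\<lambda>_. 0)"
    using z nonzero by (simp_all add: uminus_in_kerA_iff fun_eq_iff)
  then have "c1 \<le> - z 0 \<or> c2 \<le> - z 1 \<or> (v31 \<le> - z 0 \<and> v32 \<le> - z 1)"
    using positive_part_dominates_move sign v_pos c_pos by force
  then consider "v31 \<le> - z 0" "v32 \<le> - z 1" | "c1 \<le> - z 0" "- z 1 < v32" | "- z 0 < v31" "c2 \<le> - z 1"
    using herzog_relations v_pos by force
  then show ?thesis
  proof cases
    case 1
    \<comment> \<open>z + g3 is shorter than z by at least v31 + v32 + c3\<close>
    have "reduces_dist 3 g3 z"
      unfolding reduces_dist_3_iff using 1 sign \<open>c3 \<le> z 2\<close> herzog_relations v_pos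
      by (intro bexI[where x = 1]) (auto simp: abs_if)
    then show ?thesis by blast
  next
    case 2
    \<comment> \<open>z - g1 is shorter than z by at least c1 - v12 + v13\<close>
    have "reduces_dist 3 g1 z"
      unfolding reduces_dist_3_iff using 2 sign \<open>c3 \<le> z 2\<close> herzog_relations weight_order_bounds v_pos
      by (intro bexI[where x = "-1"]) (auto simp: abs_if)
    then show ?thesis by blast
  next
    case 3
    from cond show ?thesis
    proof
      assume "v21 < c2 + v23"
      \<comment> \<open>z - g2 is shorter than z by at least c2 + v23 - v21\<close>
      then have "reduces_dist 3 g2 z"
        unfolding reduces_dist_3_iff using 3 sign \<open>c3 \<le> z 2\<close> herzog_relations v_pos
        by (intro bexI[where x = "-1"]) (auto simp: abs_if)
      then show ?thesis by blast
    next
      assume "v31 < v32 + c3"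
      \<comment> \<open>z + g3 is shorter than z by at least v32 + c3 - v31\<close>
      then have "reduces_dist 3 g3 z"
        unfolding reduces_dist_3_iff using 3 sign \<open>c3 \<le> z 2\<close> herzog_relations v_pos
        by (intro bexI[where x = 1]) (auto simp: abs_if)
      then show ?thesis by blast
    qed
  qed
qed

lemma distance_reducing_if:
  assumes "v21 < c2 + v23 \<or> v31 < v32 + c3"
  shows "distance_reducing A 3 M"
  unfolding distance_reducing_def reduces_dist_set_def
proof (intro ballI impI)
  fix z assume z: "z \<in> kerA A 3" "z \<noteq> (\<lambda>_. 0)"
  have "0 < a2" "0 < a3"
    using a_pos a_less by simp_all
  obtain y where y: "y \<in> {z, - z}"
    and "(0 < y 0 \<and> y 1 \<le> 0 \<and> y 2 \<le> 0) \<or> (y 0 \<le> 0 \<and> 0 < y 1 \<and> y 2 \<le> 0)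
           \<or> (y 0 \<le> 0 \<and> y 1 \<le> 0 \<and> 0 < y 2)"
    by (rule kerA_3_single_positive[OF a_pos \<open>0 < a2\<close> \<open>0 < a3\<close> z])
  moreover have "y \<in> kerA A 3"
    using y z by (auto simp: uminus_in_kerA_iff)
  ultimately have "\<exists>g\<in>M. reduces_dist 3 g y"
    using reduces_dist_first_positive reduces_dist_second_positive reduces_dist_third_positive
      assms by meson
  then show "\<exists>g\<in>M. reduces_dist 3 g z"
    using y by (auto simp: reduces_dist_uminus)
qed

lemma circuit_not_reduced:
  assumes "0 < s" "0 < t" and "c2 + v23 \<le> v21" "v32 + c3 \<le> v31" and "g \<in> M"
  shows "\<not> reduces_dist 3 g (vec3 0 s (- t))"
proof -
  have "max 0 s = s" "max 0 (- s) = 0" "max 0 t = t" "max 0 (- t) = 0"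
    using assms by simp_all
  then show ?thesis
    using assms c_pos v_pos by (auto simp: reduces_dist_3_iff)
qed

end

theorem theorem3p6:
  fixes K :: "'k::field itself"
    and a1 a2 a3 c1 c2 c3 v12 v13 v21 v23 v31 v32 :: int
  assumes "0 < a1" and "a1 < a2" and "a2 < a3"
    and "\<not> complete_intersection_row K (vec3 a1 a2 a3) 3"
    and "0 < c1" "0 < c2" "0 < c3"
    and "0 < v12" "0 < v13" "0 < v21" "0 < v23" "0 < v31" "0 < v32"
    and "minimal_markov_basis K (vec3 a1 a2 a3) 3
           {vec3 (-c1) v12 v13, vec3 v21 (-c2) v23, vec3 v31 v32 (-c3)}"
  shows "(distance_reducing (vec3 a1 a2 a3) 3 {vec3 (-c1) v12 v13, vec3 v21 (-c2) v23, vec3 v31 v32 (-c3)}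
            \<longleftrightarrow> reduces_dist_set 3 {vec3 (-c1) v12 v13, vec3 v21 (-c2) v23, vec3 v31 v32 (-c3)}
                   {vec3 0 (a3 div gcd a2 a3) (- (a2 div gcd a2 a3))})
       \<and> (reduces_dist_set 3 {vec3 (-c1) v12 v13, vec3 v21 (-c2) v23, vec3 v31 v32 (-c3)}
                   {vec3 0 (a3 div gcd a2 a3) (- (a2 div gcd a2 a3))}
            \<longleftrightarrow> (v21 < c2 + v23 \<or> v31 < v32 + c3))"
proof -
  interpret positive_markov_basis3 K a1 a2 a3 c1 c2 c3 v12 v13 v21 v23 v31 v32
    using assms by unfold_locales (simp_all add: minimal_markov_basis_def)
  define s t where "s = a3 div gcd a2 a3" and "t = a2 div gcd a2 a3"
  have "0 < s" "0 < t"
    using div_gcd_pos[of a2 a3] assms(1-3) by (simp_all add: s_def t_def gcd.commute)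
  have circuit: "vec3 0 s (- t) \<in> kerA A 3"
    unfolding s_def t_def by (rule circuit_in_kerA)
  have "distance_reducing A 3 M \<Longrightarrow> reduces_dist_set 3 M {vec3 0 s (- t)}"
    using circuit by (simp add: distance_reducing_def reduces_dist_set_def)
  moreover have "\<not> reduces_dist_set 3 M {vec3 0 s (- t)}" if "\<not> (v21 < c2 + v23 \<or> v31 < v32 + c3)"
    using circuit_not_reduced[OF \<open>0 < s\<close> \<open>0 < t\<close>] that \<open>0 < s\<close>
    by (auto simp: reduces_dist_set_def vec3_eq_0_iff not_less)
  moreover have "v21 < c2 + v23 \<or> v31 < v32 + c3 \<Longrightarrow> distance_reducing A 3 M"
    by (rule distance_reducing_if)
  ultimately show ?thesis
    unfolding s_def t_def by blast
qed

end
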